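(* Let $\alpha\in(0,1)$ and $\vartheta>0$, and let $M_\alpha(u_1,u_2)=\min\{u_1^{1-\alpha}u_2,\,u_1\}$ (Marshall–Olkin copula) and $C_\vartheta(u_1,u_2)=(u_1^{-\vartheta}+u_2^{-\vartheta}-1)^{-1/\vartheta}$ (Clayton copula). Then $\Lambda(\boldsymbol w;M_\alpha)=0<\Lambda(\boldsymbol w;C_\vartheta)$ for all $\boldsymbol w\in(0,\infty)^2$, so $M_\alpha<_{TD}C_\vartheta$, while $C_\vartheta(t,t^\alpha)<M_\alpha(t,t^\alpha)=t$ for all $t\in(0,1)$. In particular $M_\alpha\le_{loc}C_\vartheta$ fails, so $C_1<_{TD}C_2$ does not imply $C_1\le_{loc}C_2$ in general.
   Context: The tail dependence function of a $d$-copula $C$ is $\Lambda(\boldsymbol w;C)=\lim_{s\searrow0}C(s\boldsymbol w)/s$, $\boldsymbol w\in[0,\infty)^d$. $C_1<_{TD}C_2$ means $\Lambda(\boldsymbol w;C_1)<\Lambda(\boldsymbol w;C_2)$ for all $\boldsymbol w\in(0,\infty)^d$. $C_1\le_{loc}C_2$ means there is $\varepsilon>0$ with $C_1(\boldsymbol u)\le C_2(\boldsymbol u)$ for all $\boldsymbol u\in B_\varepsilon(\boldsymbol 0)\cap[0,1]^d$ (Euclidean ball). *)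

theory Defs
  imports "HOL-Analysis.Analysis"
begin

definition tail_dep :: "(real^'n \<Rightarrow> real) \<Rightarrow> real^'n \<Rightarrow> real" where
  "tail_dep C w = Lim (at_right 0) (\<lambda>s. C (s *\<^sub>R w) / s)"

definition less_TD :: "(real^'n \<Rightarrow> real) \<Rightarrow> (real^'n \<Rightarrow> real) \<Rightarrow> bool" where
  "less_TD C1 C2 \<longleftrightarrow> (\<forall>w. (\<forall>i. 0 < w $ i) \<longrightarrow> tail_dep C1 w < tail_dep C2 w)"

definition le_loc :: "(real^'n \<Rightarrow> real) \<Rightarrow> (real^'n \<Rightarrow> real) \<Rightarrow> bool" where
  "le_loc C1 C2 \<longleftrightarrow> (\<exists>\<epsilon>>0. \<forall>u. u \<in> ball 0 \<epsilon> \<and> (\<forall>i. 0 \<le> u $ i \<and> u $ i \<le> 1) \<longrightarrow> C1 u \<le> C2 u)"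

definition marshall_olkin :: "real \<Rightarrow> real^2 \<Rightarrow> real" where
  "marshall_olkin \<alpha> u = min ((u $ 1) powr (1 - \<alpha>) * (u $ 2)) (u $ 1)"

text \<open>Clayton copula C_theta(u1,u2) = (u1^-theta + u2^-theta - 1)^(-1/theta),
  extended by its continuous value 0 when a coordinate is 0.\<close>
definition clayton :: "real \<Rightarrow> real^2 \<Rightarrow> real" where
  "clayton \<theta> u = (if u $ 1 = 0 \<or> u $ 2 = 0 then 0
     else ((u $ 1) powr (- \<theta>) + (u $ 2) powr (- \<theta>) - 1) powr (- 1 / \<theta>))"

end

theory Submission
  imports Defs
begin

text \<open>Along a ray, M_alpha(s w)/s = min((s w1)^(1-alpha) w2, w1) tends to 0, whereas
  C_theta(s w)/s = (w1^-theta + w2^-theta - s^theta)^(-1/theta) has a positive limit; so M_alpha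
  lies strictly below C_theta in the tail dependence order. Yet on the curve t \<mapsto> (t, t^alpha),
  which runs into the origin, M_alpha = t while C_theta < (t^-theta)^(-1/theta) = t, so no
  neighbourhood of the origin carries the pointwise inequality M_alpha \<le> C_theta.\<close>

lemma tail_dep_eqI:
  assumes "((\<lambda>s. C (s *\<^sub>R w) / s) \<longlongrightarrow> L) (at_right 0)"
  shows "tail_dep C w = L"
  unfolding tail_dep_def using assms by (intro tendsto_Lim) auto

lemma not_le_loc_if_curve:
  fixes \<gamma> :: "real \<Rightarrow> real^'n"
  assumes "(\<gamma> \<longlongrightarrow> 0) (at_right 0)"
    and "\<forall>\<^sub>F t in at_right 0. \<forall>i. 0 \<le> \<gamma> t $ i \<and> \<gamma> t $ i \<le> 1"
    and "\<forall>\<^sub>F t in at_right 0. C2 (\<gamma> t) < C1 (\<gamma> t)"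
  shows "\<not> le_loc C1 C2"
proof
  assume "le_loc C1 C2"
  then obtain e where "e > 0" and le: "\<And>u. u \<in> ball 0 e \<Longrightarrow> \<forall>i. 0 \<le> u $ i \<and> u $ i \<le> 1 \<Longrightarrow> C1 u \<le> C2 u"
    unfolding le_loc_def by blast
  have "\<forall>\<^sub>F t in at_right 0. \<gamma> t \<in> ball 0 e"
    using tendstoD[OF assms(1) \<open>e > 0\<close>] by (simp add: dist_commute)
  with assms(2,3) have "\<forall>\<^sub>F t in at_right (0::real). False"
    by eventually_elim (use le in force)
  then show False by simp
qed

lemma tendsto_powr_at_right_zero:
  fixes c :: real
  assumes "0 < a" "0 < c"
  shows "((\<lambda>s. (c * s) powr a) \<longlongrightarrow> 0) (at_right 0)"
  by (rule tendsto_zero_powrI[where g="\<lambda>_. a" and b=a])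
     (use assms in \<open>auto intro!: tendsto_eq_intros eventually_at_rightI[of 0 1]\<close>)

lemma marshall_olkin_scaled_div:
  assumes "0 < s" "0 < w$1" "0 < w$2"
  shows "marshall_olkin \<alpha> (s *\<^sub>R w) / s = min ((s * w$1) powr (1 - \<alpha>) * w$2) (w$1)"
  using assms by (simp add: marshall_olkin_def min_divide_distrib_right)

lemma tendsto_marshall_olkin_tail:
  assumes "\<alpha> < 1" "0 < w$1" "0 < w$2"
  shows "((\<lambda>s. marshall_olkin \<alpha> (s *\<^sub>R w) / s) \<longlongrightarrow> 0) (at_right 0)"
proof -
  have "((\<lambda>s. (w$1 * s) powr (1 - \<alpha>)) \<longlongrightarrow> 0) (at_right 0)"
    using assms by (intro tendsto_powr_at_right_zero) auto
  then have "((\<lambda>s. min ((s * w$1) powr (1 - \<alpha>) * w$2) (w$1)) \<longlongrightarrow> min 0 (w$1)) (at_right 0)"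
    by (intro tendsto_min tendsto_mult_left_zero) (auto simp: mult.commute)
  moreover have "\<forall>\<^sub>F s in at_right 0.
      min ((s * w$1) powr (1 - \<alpha>) * w$2) (w$1) = marshall_olkin \<alpha> (s *\<^sub>R w) / s"
    using eventually_at_right_less[of 0]
    by eventually_elim (use assms marshall_olkin_scaled_div in auto)
  ultimately show ?thesis
    using assms by (simp add: tendsto_cong)
qed

lemma marshall_olkin_on_curve:
  assumes "0 < t"
  shows "marshall_olkin \<alpha> (vector [t, t powr \<alpha>]) = t"
  using assms by (simp add: marshall_olkin_def vector_2 powr_add[symmetric])

lemma clayton_scaled_div:
  assumes "0 < s" "0 < w$1" "0 < w$2" "0 < \<theta>"
    and pos: "0 < (w$1) powr (-\<theta>) + (w$2) powr (-\<theta>) - s powr \<theta>"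
  shows "clayton \<theta> (s *\<^sub>R w) / s = ((w$1) powr (-\<theta>) + (w$2) powr (-\<theta>) - s powr \<theta>) powr (-1/\<theta>)"
proof -
  let ?g = "(w$1) powr (-\<theta>) + (w$2) powr (-\<theta>) - s powr \<theta>"
  have "(s * w$1) powr (-\<theta>) + (s * w$2) powr (-\<theta>) - 1 = s powr (-\<theta>) * ?g"
    using assms by (simp add: powr_mult algebra_simps powr_minus field_simps)
  then have "clayton \<theta> (s *\<^sub>R w) = (s powr (-\<theta>) * ?g) powr (-1/\<theta>)"
    using assms by (simp add: clayton_def)
  also have "\<dots> = (s powr (-\<theta>)) powr (-1/\<theta>) * ?g powr (-1/\<theta>)"
    using assms pos by (simp add: powr_mult)
  also have "(s powr (-\<theta>)) powr (-1/\<theta>) = s"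
    using assms by (simp add: powr_powr)
  finally show ?thesis using assms by simp
qed

lemma tendsto_clayton_tail:
  assumes "0 < \<theta>" "0 < w$1" "0 < w$2"
  shows "((\<lambda>s. clayton \<theta> (s *\<^sub>R w) / s) \<longlongrightarrow> ((w$1) powr (-\<theta>) + (w$2) powr (-\<theta>)) powr (-1/\<theta>))
           (at_right 0)"
proof -
  let ?L = "(w$1) powr (-\<theta>) + (w$2) powr (-\<theta>)"
  define g where "g s = ?L - s powr \<theta>" for s
  have "0 < ?L" using assms by (intro add_pos_pos) auto
  have "((\<lambda>s. (1 * s) powr \<theta>) \<longlongrightarrow> 0) (at_right 0)"
    using assms by (intro tendsto_powr_at_right_zero) auto
  then have g: "(g \<longlongrightarrow> ?L) (at_right 0)"
    unfolding g_def using tendsto_diff[OF tendsto_const, of _ 0 _ ?L] by simp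
  then have "\<forall>\<^sub>F s in at_right 0. 0 < g s"
    using \<open>0 < ?L\<close> by (rule order_tendstoD(1))
  then have "\<forall>\<^sub>F s in at_right 0. g s powr (-1/\<theta>) = clayton \<theta> (s *\<^sub>R w) / s"
    using eventually_at_right_less[of 0]
    by eventually_elim (use assms clayton_scaled_div in \<open>auto simp: g_def\<close>)
  moreover have "((\<lambda>s. g s powr (-1/\<theta>)) \<longlongrightarrow> ?L powr (-1/\<theta>)) (at_right 0)"
    using \<open>0 < ?L\<close> by (intro tendsto_powr g tendsto_const) auto
  ultimately show ?thesis by (simp add: tendsto_cong)
qed

lemma clayton_on_curve_less:
  assumes "0 < \<alpha>" "0 < \<theta>" "0 < t" "t < 1"
  shows "clayton \<theta> (vector [t, t powr \<alpha>]) < t"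
proof -
  have "1 < (t powr \<alpha>) powr (-\<theta>)"
    using assms by (simp add: powr_powr powr_minus one_less_inverse_iff powr01_less_one)
  then have "clayton \<theta> (vector [t, t powr \<alpha>]) < (t powr (-\<theta>)) powr (-1/\<theta>)"
    using assms by (simp add: clayton_def vector_2 powr_less_mono2_neg)
  also have "\<dots> = t" using assms by (simp add: powr_powr)
  finally show ?thesis .
qed

lemma tendsto_curve_zero:
  assumes "0 < \<alpha>"
  shows "((\<lambda>t. vector [t, t powr \<alpha>] :: real^2) \<longlongrightarrow> 0) (at_right 0)"
proof (rule vec_tendstoI)
  fix i :: 2
  have "((\<lambda>t. (1 * t) powr \<alpha>) \<longlongrightarrow> 0) (at_right 0)"
    using assms by (intro tendsto_powr_at_right_zero) auto
  then show "((\<lambda>t. (vector [t, t powr \<alpha>] :: real^2) $ i) \<longlongrightarrow> 0 $ i) (at_right 0)"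
    using exhaust_2[of i] by (auto simp: vector_2 tendsto_ident_at)
qed

theorem mainTheorem4:
  fixes \<alpha> \<theta> :: real
  assumes "0 < \<alpha>" "\<alpha> < 1" "0 < \<theta>"
  shows "(\<forall>w::real^2. (\<forall>i. 0 < w $ i) \<longrightarrow>
            ((\<lambda>s. marshall_olkin \<alpha> (s *\<^sub>R w) / s) \<longlongrightarrow> tail_dep (marshall_olkin \<alpha>) w) (at_right 0)
          \<and> ((\<lambda>s. clayton \<theta> (s *\<^sub>R w) / s) \<longlongrightarrow> tail_dep (clayton \<theta>) w) (at_right 0)
          \<and> tail_dep (marshall_olkin \<alpha>) w = 0
          \<and> 0 < tail_dep (clayton \<theta>) w)
       \<and> less_TD (marshall_olkin \<alpha>) (clayton \<theta>)
       \<and> (\<forall>t. 0 < t \<and> t < 1 \<longrightarrow>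
            clayton \<theta> (vector [t, t powr \<alpha>]) < marshall_olkin \<alpha> (vector [t, t powr \<alpha>])
          \<and> marshall_olkin \<alpha> (vector [t, t powr \<alpha>]) = t)
       \<and> \<not> le_loc (marshall_olkin \<alpha>) (clayton \<theta>)"
proof -
  have tails: "((\<lambda>s. marshall_olkin \<alpha> (s *\<^sub>R w) / s) \<longlongrightarrow> tail_dep (marshall_olkin \<alpha>) w) (at_right 0)
          \<and> ((\<lambda>s. clayton \<theta> (s *\<^sub>R w) / s) \<longlongrightarrow> tail_dep (clayton \<theta>) w) (at_right 0)
          \<and> tail_dep (marshall_olkin \<alpha>) w = 0
          \<and> 0 < tail_dep (clayton \<theta>) w" if "\<forall>i. 0 < w $ i" for w :: "real^2"
  proof -
    from that have "0 < w$1" "0 < w$2" by auto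
    note mo = tendsto_marshall_olkin_tail[OF assms(2) this]
      and cl = tendsto_clayton_tail[OF assms(3) this]
    have "0 < (w$1) powr (-\<theta>) + (w$2) powr (-\<theta>)"
      using \<open>0 < w$1\<close> \<open>0 < w$2\<close> by (intro add_pos_pos) auto
    then show ?thesis
      using mo cl tail_dep_eqI[OF mo] tail_dep_eqI[OF cl] by auto
  qed
  have curve: "clayton \<theta> (vector [t, t powr \<alpha>]) < marshall_olkin \<alpha> (vector [t, t powr \<alpha>])
          \<and> marshall_olkin \<alpha> (vector [t, t powr \<alpha>]) = t" if "0 < t" "t < 1" for t
    using that clayton_on_curve_less[OF assms(1,3)] marshall_olkin_on_curve by auto
  have "\<forall>\<^sub>F t in at_right 0. 0 < t \<and> t < (1::real)"
    by (rule eventually_at_rightI[of 0 1]) auto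
  then have "\<not> le_loc (marshall_olkin \<alpha>) (clayton \<theta>)"
    using assms(1) curve
    by (intro not_le_loc_if_curve[OF tendsto_curve_zero[OF assms(1)]])
       (auto elim!: eventually_mono simp: forall_2 vector_2 powr_le1)
  moreover have "less_TD (marshall_olkin \<alpha>) (clayton \<theta>)"
    unfolding less_TD_def using tails by auto
  ultimately show ?thesis
    using tails curve by blast
qed

end
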